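(* Let $E$ be an almost finitely generated $R$-module and $R\to T$ a ring morphism. Then $E\otimes_RT$ is an almost finitely generated $T$-module.
   Context: Rings are commutative and unital. An $A$-module $E$ is almost finitely generated (afg) over $A$ if there is a ring morphism $A\to S$ such that $E$ is a finitely generated $S$-module whose induced $A$-module structure is the original one. *)

theory Defs
  imports "HOL-Algebra.Module"
begin

definition fin_gen :: "('s, 'x) ring_scheme \<Rightarrow> ('s, 'e) module \<Rightarrow> bool" where
  "fin_gen S M \<longleftrightarrow> (\<exists>X. finite X \<and> X \<subseteq> carrier M \<and>
     (\<forall>x \<in> carrier M. \<exists>a \<in> X \<rightarrow> carrier S.
        x = finsum M (\<lambda>v. a v \<odot>\<^bsub>M\<^esub> v) X))"

definition with_smult :: "('r, 'e) module \<Rightarrow> ('s \<Rightarrow> 'e \<Rightarrow> 'e) \<Rightarrow> ('s, 'e) module" where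
  "with_smult M sm = \<lparr>carrier = carrier M, mult = mult M, one = one M,
     zero = zero M, add = add M, smult = sm\<rparr>"

text \<open>E is afg over A, with the auxiliary ring S taken of type 's: there is a ring
 morphism phi from A to S and an S-module structure sm on E (same underlying group)
 which is finitely generated and whose restriction along phi is the original A-action.\<close>
definition afg_with :: "'s itself \<Rightarrow> ('r, 'x) ring_scheme \<Rightarrow> ('r, 'e) module \<Rightarrow> bool" where
  "afg_with _ A E \<longleftrightarrow> (\<exists>(S :: 's ring) (\<phi> :: 'r \<Rightarrow> 's) (sm :: 's \<Rightarrow> 'e \<Rightarrow> 'e).
      cring S \<and> \<phi> \<in> ring_hom A S \<and> module S (with_smult E sm) \<and>
      (\<forall>a \<in> carrier A. \<forall>x \<in> carrier E. sm (\<phi> a) x = a \<odot>\<^bsub>E\<^esub> x) \<and>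
      fin_gen S (with_smult E sm))"

text \<open>Default: S ranges over rings on the type of self-maps of the carrier type of E
 (large enough, since S may be replaced by S modulo the annihilator of E, which embeds
 into the endomorphisms of E).\<close>
definition afg :: "('r, 'x) ring_scheme \<Rightarrow> ('r, 'e) module \<Rightarrow> bool" where
  "afg A E \<longleftrightarrow> afg_with TYPE('e \<Rightarrow> 'e) A E"

text \<open>Free abelian group on carrier E \<times> carrier T: finitely supported integer functions.\<close>
definition tensor_free :: "('r, 'e) module \<Rightarrow> ('t, 'y) ring_scheme \<Rightarrow> ('e \<times> 't \<Rightarrow> int) set" where
  "tensor_free E T = {g. finite {p. g p \<noteq> 0} \<and> {p. g p \<noteq> 0} \<subseteq> carrier E \<times> carrier T}"

definition delta :: "'a \<Rightarrow> 'a \<Rightarrow> int" where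
  "delta p = (\<lambda>q. if q = p then 1 else 0)"

inductive_set tensor_rel :: "('r, 'x) ring_scheme \<Rightarrow> ('r, 'e) module \<Rightarrow> ('t, 'y) ring_scheme
    \<Rightarrow> ('r \<Rightarrow> 't) \<Rightarrow> ('e \<times> 't \<Rightarrow> int) set"
  for R E T f where
  rel_zero: "(\<lambda>_. 0) \<in> tensor_rel R E T f"
| rel_addl: "\<lbrakk>e \<in> carrier E; e' \<in> carrier E; t \<in> carrier T\<rbrakk> \<Longrightarrow>
     (\<lambda>q. delta (e \<oplus>\<^bsub>E\<^esub> e', t) q - delta (e, t) q - delta (e', t) q) \<in> tensor_rel R E T f"
| rel_addr: "\<lbrakk>e \<in> carrier E; t \<in> carrier T; t' \<in> carrier T\<rbrakk> \<Longrightarrow>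
     (\<lambda>q. delta (e, t \<oplus>\<^bsub>T\<^esub> t') q - delta (e, t) q - delta (e, t') q) \<in> tensor_rel R E T f"
| rel_bal: "\<lbrakk>r \<in> carrier R; e \<in> carrier E; t \<in> carrier T\<rbrakk> \<Longrightarrow>
     (\<lambda>q. delta (r \<odot>\<^bsub>E\<^esub> e, t) q - delta (e, f r \<otimes>\<^bsub>T\<^esub> t) q) \<in> tensor_rel R E T f"
| rel_add: "\<lbrakk>g \<in> tensor_rel R E T f; h \<in> tensor_rel R E T f\<rbrakk> \<Longrightarrow>
     (\<lambda>q. g q + h q) \<in> tensor_rel R E T f"
| rel_neg: "g \<in> tensor_rel R E T f \<Longrightarrow> (\<lambda>q. - g q) \<in> tensor_rel R E T f"

definition tensor_cls :: "('r, 'x) ring_scheme \<Rightarrow> ('r, 'e) module \<Rightarrow> ('t, 'y) ring_scheme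
    \<Rightarrow> ('r \<Rightarrow> 't) \<Rightarrow> ('e \<times> 't \<Rightarrow> int) \<Rightarrow> ('e \<times> 't \<Rightarrow> int) set" where
  "tensor_cls R E T f g = {h \<in> tensor_free E T. (\<lambda>q. g q - h q) \<in> tensor_rel R E T f}"

definition tensor_rep :: "('e \<times> 't \<Rightarrow> int) set \<Rightarrow> ('e \<times> 't \<Rightarrow> int)" where
  "tensor_rep X = (SOME g. g \<in> X)"

text \<open>Action of t on the free group: (e, s) \<mapsto> (e, t s), extended additively.\<close>
definition tensor_act :: "('t, 'y) ring_scheme \<Rightarrow> 't \<Rightarrow> ('e \<times> 't \<Rightarrow> int) \<Rightarrow> ('e \<times> 't \<Rightarrow> int)" where
  "tensor_act T t g = (\<lambda>(e, s). \<Sum>u \<in> {u \<in> carrier T. t \<otimes>\<^bsub>T\<^esub> u = s \<and> g (e, u) \<noteq> 0}. g (e, u))"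

text \<open>E \<otimes>_R T as a T-module (the ring fields mult/one are irrelevant for modules).\<close>
definition base_change :: "('r, 'x) ring_scheme \<Rightarrow> ('r, 'e) module \<Rightarrow> ('t, 'y) ring_scheme
    \<Rightarrow> ('r \<Rightarrow> 't) \<Rightarrow> ('t, ('e \<times> 't \<Rightarrow> int) set) module" where
  "base_change R E T f =
    \<lparr>carrier = tensor_cls R E T f ` tensor_free E T,
     mult = (\<lambda>_ _. {}), one = {},
     zero = tensor_cls R E T f (\<lambda>_. 0),
     add = (\<lambda>X Y. tensor_cls R E T f (\<lambda>q. tensor_rep X q + tensor_rep Y q)),
     smult = (\<lambda>t X. tensor_cls R E T f (tensor_act T t (tensor_rep X)))\<rparr>"

end

theory Submission
  imports Defs "HOL-Algebra.AbelCoset"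
begin

(* Suppose E is a finitely generated S-module, with generators v_1, ..., v_n, where S is a ring
   under R, and put M = E \<otimes>\<^sub>R T.  The maps e \<otimes> t \<mapsto> s e \<otimes> t (s \<in> S) and e \<otimes> t \<mapsto> e \<otimes> t' t
   (t' \<in> T) respect the defining relations of the tensor product, so they induce additive
   endomorphisms of M, and these commute pairwise.  Their bicommutant K in the endomorphisms
   of M is a commutative ring that contains them, M is a K-module by evaluation, T acts
   through K, and M is generated over K by v_1 \<otimes> 1, ..., v_n \<otimes> 1 because
   s e \<otimes> t = (s \<otimes> t) (e \<otimes> 1).  The bicommutant stands in for the image of S \<otimes>\<^sub>R T: the
   auxiliary ring must be a ring of self-maps of the carrier of M. *)

section \<open>Finitely supported integer functions\<close>

definition supp :: "('a \<Rightarrow> int) \<Rightarrow> 'a set" where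
  "supp g = {p. g p \<noteq> 0}"

definition push :: "('a \<Rightarrow> 'b) \<Rightarrow> ('a \<Rightarrow> int) \<Rightarrow> 'b \<Rightarrow> int" where
  "push \<phi> g q = (\<Sum>p | p \<in> supp g \<and> \<phi> p = q. g p)"

lemma supp_delta [simp]: "supp (delta p) = {p}"
  by (auto simp: supp_def delta_def)

lemma supp_add: "supp (\<lambda>q. g q + h q) \<subseteq> supp g \<union> supp h"
  by (auto simp: supp_def)

lemma supp_diff: "supp (\<lambda>q. g q - h q) \<subseteq> supp g \<union> supp h"
  by (auto simp: supp_def)

lemma supp_neg [simp]: "supp (\<lambda>q. - g q) = supp g"
  by (simp add: supp_def)

lemma finite_supp_add [simp]:
  "finite (supp g) \<Longrightarrow> finite (supp h) \<Longrightarrow> finite (supp (\<lambda>q. g q + h q))"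
  by (rule finite_subset[OF supp_add]) simp

lemma finite_supp_diff [simp]:
  "finite (supp g) \<Longrightarrow> finite (supp h) \<Longrightarrow> finite (supp (\<lambda>q. g q - h q))"
  using finite_supp_add[of g "\<lambda>q. - h q"] by simp

lemma push_eq_sum_superset:
  assumes "finite S" "supp g \<subseteq> S"
  shows "push \<phi> g q = (\<Sum>p | p \<in> S \<and> \<phi> p = q. g p)"
  unfolding push_def
  by (rule sum.mono_neutral_left) (use assms in \<open>auto simp: supp_def\<close>)

lemma push_add:
  assumes "finite (supp g)" "finite (supp h)"
  shows "push \<phi> (\<lambda>q. g q + h q) = (\<lambda>q. push \<phi> g q + push \<phi> h q)"
proof
  fix q
  let ?S = "supp g \<union> supp h"
  have "finite ?S" using assms by simp
  then show "push \<phi> (\<lambda>q. g q + h q) q = push \<phi> g q + push \<phi> h q"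
    using supp_add[of g h] by (simp add: push_eq_sum_superset[of ?S] sum.distrib)
qed

lemma push_neg: "push \<phi> (\<lambda>q. - g q) = (\<lambda>q. - push \<phi> g q)"
  by (simp add: push_def fun_eq_iff sum_negf)

lemma push_diff:
  assumes "finite (supp g)" "finite (supp h)"
  shows "push \<phi> (\<lambda>q. g q - h q) = (\<lambda>q. push \<phi> g q - push \<phi> h q)"
  using push_add[of g "\<lambda>q. - h q" \<phi>] assms by (simp add: push_neg)

lemma push_zero [simp]: "push \<phi> (\<lambda>_. 0) = (\<lambda>_. 0)"
  by (simp add: fun_eq_iff push_def supp_def)

lemma push_delta [simp]: "push \<phi> (delta p) = delta (\<phi> p)"
proof
  fix q
  have "{p'. p' \<in> supp (delta p) \<and> \<phi> p' = q} = (if \<phi> p = q then {p} else {})"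
    by auto
  then show "push \<phi> (delta p) q = delta (\<phi> p) q"
    by (simp add: push_def delta_def)
qed

lemma supp_push: "supp (push \<phi> g) \<subseteq> \<phi> ` supp g"
proof
  fix q assume "q \<in> supp (push \<phi> g)"
  then have "push \<phi> g q \<noteq> 0" by (simp add: supp_def)
  then obtain p where "p \<in> supp g" "\<phi> p = q"
    unfolding push_def by (metis (mono_tags, lifting) Collect_empty_eq sum.empty)
  then show "q \<in> \<phi> ` supp g" by auto
qed

lemma finite_support_induct [consumes 1, case_names zero plus minus]:
  assumes "finite (supp g)"
    and zero: "Q (\<lambda>_. 0)"
    and plus: "\<And>h p. p \<in> supp g \<Longrightarrow> Q h \<Longrightarrow> Q (\<lambda>q. h q + delta p q)"
    and minus: "\<And>h p. p \<in> supp g \<Longrightarrow> Q h \<Longrightarrow> Q (\<lambda>q. h q - delta p q)"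
  shows "Q g"
proof -
  have multiple: "Q (\<lambda>q. h q + k * delta p q)" if p: "p \<in> supp g" and "Q h" for h p and k :: int
  proof (induction k rule: int_induct[where k = 0])
    case base
    then show ?case using \<open>Q h\<close> by simp
  next
    case (step1 i)
    then show ?case using plus[OF p step1(2)] by (simp add: algebra_simps)
  next
    case (step2 i)
    then show ?case using minus[OF p step2(2)] by (simp add: algebra_simps)
  qed
  have "Q (\<lambda>q. if q \<in> S then g q else 0)" if "S \<subseteq> supp g" for S
    using finite_subset[OF that assms(1)] that
  proof (induction S rule: finite_induct)
    case empty
    then show ?case using zero by simp
  next
    case (insert p S)
    then have "(\<lambda>q. if q \<in> insert p S then g q else 0)
        = (\<lambda>q. (if q \<in> S then g q else 0) + g p * delta p q)"
      by (auto simp: fun_eq_iff delta_def)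
    then show ?case using insert multiple by simp
  qed
  moreover have "(\<lambda>q. if q \<in> supp g then g q else 0) = g"
    by (auto simp: supp_def)
  ultimately show ?thesis by (metis order_refl)
qed

lemma abelian_group_hom_additiveI:
  assumes "abelian_group G" "abelian_group H" "h \<in> carrier G \<rightarrow> carrier H"
    and "\<And>x y. x \<in> carrier G \<Longrightarrow> y \<in> carrier G \<Longrightarrow> h (x \<oplus>\<^bsub>G\<^esub> y) = h x \<oplus>\<^bsub>H\<^esub> h y"
  shows "abelian_group_hom G H h"
proof (rule abelian_group_homI[OF assms(1,2)])
  show "group_hom (add_monoid G) (add_monoid H) h"
    using assms
    by (auto intro!: group_hom.intro abelian_group.a_group simp: group_hom_axioms_def hom_def)
qed

lemma abelian_group_hom_comp:
  assumes "abelian_group_hom G H h" "abelian_group_hom H I i"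
  shows "abelian_group_hom G I (\<lambda>x. i (h x))"
proof -
  interpret h: abelian_group_hom G H h by fact
  interpret i: abelian_group_hom H I i by fact
  show ?thesis
    by (intro abelian_group_hom_additiveI abelian_group_hom.axioms(1)[OF assms(1)]
        abelian_group_hom.axioms(2)[OF assms(2)]) auto
qed

lemma abelian_group_hom_restrict:
  assumes "abelian_group_hom G H h"
  shows "abelian_group_hom G H (restrict h (carrier G))"
proof -
  interpret abelian_group_hom G H h by fact
  show ?thesis
    by (intro abelian_group_hom_additiveI abelian_group_hom.axioms[OF assms]) auto
qed

lemma (in abelian_group_hom) hom_finsum:
  assumes "finite A" "f \<in> A \<rightarrow> carrier G"
  shows "h (finsum G f A) = finsum H (\<lambda>a. h (f a)) A"
  using assms
proof (induction A rule: finite_induct)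
  case (insert a A)
  then have "(\<lambda>a. h (f a)) \<in> A \<rightarrow> carrier H" by (auto simp: Pi_iff)
  with insert show ?case by (simp add: G.finsum_closed H.finsum_insert)
qed simp

lemma with_smult_simps [simp]:
  "carrier (with_smult M sm) = carrier M" "add (with_smult M sm) = add M"
  "zero (with_smult M sm) = zero M" "smult (with_smult M sm) = sm"
  by (simp_all add: with_smult_def)

lemma a_inv_with_smult [simp]: "a_inv (with_smult M sm) = a_inv M"
  by (rule ext) (simp add: a_inv_def m_inv_def with_smult_def)

lemma finsum_with_smult [simp]: "finsum (with_smult M sm) = finsum M"
  by (intro ext) (simp add: finsum_def finprod_def with_smult_def)

lemma abelian_group_with_smult:
  fixes M :: "('r, 'e) module"
  assumes "abelian_group M"
  shows "abelian_group (with_smult M sm)"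
proof -
  interpret abelian_group M by fact
  show ?thesis
  proof (rule abelian_groupI)
    fix x assume "x \<in> carrier (with_smult M sm)"
    then show "\<exists>y \<in> carrier (with_smult M sm). y \<oplus>\<^bsub>with_smult M sm\<^esub> x = \<zero>\<^bsub>with_smult M sm\<^esub>"
      by (intro bexI[of _ "\<ominus>\<^bsub>M\<^esub> x"]) (auto simp: l_neg)
  qed (auto simp: a_ac)
qed

section \<open>Linear spans\<close>

definition lin_span :: "('a, 'x) ring_scheme \<Rightarrow> ('a, 'e, 'y) module_scheme \<Rightarrow> 'e set \<Rightarrow> 'e set" where
  "lin_span K M A = {x. \<exists>a \<in> A \<rightarrow> carrier K. x = finsum M (\<lambda>v. a v \<odot>\<^bsub>M\<^esub> v) A}"

lemma fin_gen_iff: "fin_gen K M \<longleftrightarrow> (\<exists>A. finite A \<and> A \<subseteq> carrier M \<and> carrier M \<subseteq> lin_span K M A)"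
  unfolding fin_gen_def lin_span_def by blast

context module
begin

context
  fixes A assumes A: "finite A" "A \<subseteq> carrier M"
begin

lemma lin_span_closed: "x \<in> lin_span R M A \<Longrightarrow> x \<in> carrier M"
  using A unfolding lin_span_def by (auto intro!: M.finsum_closed)

lemma lin_span_zero: "\<zero>\<^bsub>M\<^esub> \<in> lin_span R M A"
proof -
  have "finsum M (\<lambda>v. \<zero> \<odot>\<^bsub>M\<^esub> v) A = finsum M (\<lambda>v. \<zero>\<^bsub>M\<^esub>) A"
    using A by (intro M.finsum_cong') auto
  then have "finsum M (\<lambda>v. \<zero> \<odot>\<^bsub>M\<^esub> v) A = \<zero>\<^bsub>M\<^esub>" by simp
  then show ?thesis unfolding lin_span_def by (force intro!: bexI[of _ "\<lambda>_. \<zero>"])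
qed

lemma lin_span_base: "v \<in> A \<Longrightarrow> v \<in> lin_span R M A"
proof -
  assume v: "v \<in> A"
  let ?a = "\<lambda>w. if v = w then \<one> else \<zero>"
  have "finsum M (\<lambda>w. ?a w \<odot>\<^bsub>M\<^esub> w) A = finsum M (\<lambda>w. if v = w then w else \<zero>\<^bsub>M\<^esub>) A"
    using A by (intro M.finsum_cong') (auto simp: subset_iff)
  also have "\<dots> = v" using A v by (intro M.finsum_singleton) auto
  finally show ?thesis unfolding lin_span_def by (intro CollectI bexI[of _ ?a]) auto
qed

lemma lin_span_add:
  assumes "x \<in> lin_span R M A" "y \<in> lin_span R M A"
  shows "x \<oplus>\<^bsub>M\<^esub> y \<in> lin_span R M A"
proof -
  obtain a b where a: "a \<in> A \<rightarrow> carrier R" "x = finsum M (\<lambda>v. a v \<odot>\<^bsub>M\<^esub> v) A"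
    and b: "b \<in> A \<rightarrow> carrier R" "y = finsum M (\<lambda>v. b v \<odot>\<^bsub>M\<^esub> v) A"
    using assms unfolding lin_span_def by auto
  have "x \<oplus>\<^bsub>M\<^esub> y = finsum M (\<lambda>v. a v \<odot>\<^bsub>M\<^esub> v \<oplus>\<^bsub>M\<^esub> b v \<odot>\<^bsub>M\<^esub> v) A"
    using a b A by (subst M.finsum_addf) (auto simp: Pi_def subset_iff)
  also have "\<dots> = finsum M (\<lambda>v. (a v \<oplus> b v) \<odot>\<^bsub>M\<^esub> v) A"
    using a b A by (intro M.finsum_cong') (auto simp: Pi_def subset_iff smult_l_distr)
  finally show ?thesis
    unfolding lin_span_def using a b by (intro CollectI bexI[of _ "\<lambda>v. a v \<oplus> b v"]) auto
qed

lemma lin_span_smult: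
  assumes "c \<in> carrier R" "x \<in> lin_span R M A"
  shows "c \<odot>\<^bsub>M\<^esub> x \<in> lin_span R M A"
proof -
  obtain a where a: "a \<in> A \<rightarrow> carrier R" "x = finsum M (\<lambda>v. a v \<odot>\<^bsub>M\<^esub> v) A"
    using assms unfolding lin_span_def by auto
  have "c \<odot>\<^bsub>M\<^esub> x = finsum M (\<lambda>v. c \<odot>\<^bsub>M\<^esub> (a v \<odot>\<^bsub>M\<^esub> v)) A"
    unfolding a(2) by (rule finsum_smult_ldistr) (use A a assms in auto)
  also have "\<dots> = finsum M (\<lambda>v. (c \<otimes> a v) \<odot>\<^bsub>M\<^esub> v) A"
    using a A assms by (intro M.finsum_cong') (auto simp: Pi_def subset_iff smult_assoc1)
  finally show ?thesis
    unfolding lin_span_def using a assms by (intro CollectI bexI[of _ "\<lambda>v. c \<otimes> a v"]) auto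
qed

lemma lin_span_neg: "x \<in> lin_span R M A \<Longrightarrow> \<ominus>\<^bsub>M\<^esub> x \<in> lin_span R M A"
  using lin_span_smult[of "\<ominus> \<one>" x] smult_l_minus[of \<one> x] lin_span_closed by simp

lemma lin_span_finsum:
  assumes "finite B" "f \<in> B \<rightarrow> lin_span R M A"
  shows "finsum M f B \<in> lin_span R M A"
  using assms
proof (induction B rule: finite_induct)
  case (insert b B)
  then have "f \<in> B \<rightarrow> carrier M" "f b \<in> carrier M" using lin_span_closed by auto
  with insert show ?case by (simp add: M.finsum_insert lin_span_add)
qed (simp add: lin_span_zero)

end

end

section \<open>The bicommutant of a commuting family of endomorphisms\<close>

definition commutant :: "('c, 'x) ring_scheme \<Rightarrow> ('c \<Rightarrow> 'c) set \<Rightarrow> ('c \<Rightarrow> 'c) set" where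
  "commutant N A = {G. abelian_group_hom N N G \<and> (\<forall>F \<in> A. \<forall>x \<in> carrier N. G (F x) = F (G x))}"

definition bicommutant :: "('c, 'x) ring_scheme \<Rightarrow> ('c \<Rightarrow> 'c) set \<Rightarrow> ('c \<Rightarrow> 'c) ring" where
  "bicommutant N A =
    \<lparr>carrier = extensional (carrier N) \<inter> commutant N (commutant N A),
     mult = compose (carrier N), one = (\<lambda>x \<in> carrier N. x),
     zero = (\<lambda>x \<in> carrier N. \<zero>\<^bsub>N\<^esub>), add = (\<lambda>F G. \<lambda>x \<in> carrier N. F x \<oplus>\<^bsub>N\<^esub> G x)\<rparr>"

locale commuting_endos = abelian_group N for N (structure) +
  fixes A :: "('c \<Rightarrow> 'c) set"
  assumes endos_hom: "F \<in> A \<Longrightarrow> abelian_group_hom N N F"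
    and endos_commute: "F \<in> A \<Longrightarrow> G \<in> A \<Longrightarrow> x \<in> carrier N \<Longrightarrow> F (G x) = G (F x)"
begin

abbreviation K :: "('c \<Rightarrow> 'c) ring" where "K \<equiv> bicommutant N A"

lemma bicommutant_simps:
  "carrier K = extensional (carrier N) \<inter> commutant N (commutant N A)"
  "F \<otimes>\<^bsub>K\<^esub> G = compose (carrier N) F G" "\<one>\<^bsub>K\<^esub> = (\<lambda>x \<in> carrier N. x)"
  "\<zero>\<^bsub>K\<^esub> = (\<lambda>x \<in> carrier N. \<zero>)" "F \<oplus>\<^bsub>K\<^esub> G = (\<lambda>x \<in> carrier N. F x \<oplus> G x)"
  by (simp_all add: bicommutant_def)

lemma is_abelian_group: "abelian_group N" ..

lemma commutantI:
  "abelian_group_hom N N G \<Longrightarrow> (\<And>F x. F \<in> B \<Longrightarrow> x \<in> carrier N \<Longrightarrow> G (F x) = F (G x))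
    \<Longrightarrow> G \<in> commutant N B"
  by (simp add: commutant_def)

lemma commutant_hom: "G \<in> commutant N B \<Longrightarrow> abelian_group_hom N N G"
  by (simp add: commutant_def)

lemma commutant_commutes: "G \<in> commutant N B \<Longrightarrow> F \<in> B \<Longrightarrow> x \<in> carrier N \<Longrightarrow> G (F x) = F (G x)"
  by (simp add: commutant_def)

lemma commutant_closed: "G \<in> commutant N B \<Longrightarrow> x \<in> carrier N \<Longrightarrow> G x \<in> carrier N"
  by (rule abelian_group_hom.hom_closed[OF commutant_hom])

lemma bicommutant_memI:
  assumes "abelian_group_hom N N F"
    and "\<And>G x. G \<in> commutant N A \<Longrightarrow> x \<in> carrier N \<Longrightarrow> F (G x) = G (F x)"
  shows "restrict F (carrier N) \<in> carrier K"
proof -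
  have "restrict F (carrier N) \<in> commutant N (commutant N A)"
  proof (rule commutantI)
    show "abelian_group_hom N N (restrict F (carrier N))"
      using assms(1) by (rule abelian_group_hom_restrict)
    fix G x assume "G \<in> commutant N A" "x \<in> carrier N"
    then show "restrict F (carrier N) (G x) = G (restrict F (carrier N) x)"
      using assms(2) commutant_closed by simp
  qed
  then show ?thesis by (simp add: bicommutant_simps)
qed

lemma bicommutant_hom: "F \<in> carrier K \<Longrightarrow> abelian_group_hom N N F"
  unfolding bicommutant_simps by (blast intro: commutant_hom)

lemma bicommutant_closed: "F \<in> carrier K \<Longrightarrow> x \<in> carrier N \<Longrightarrow> F x \<in> carrier N"
  by (rule abelian_group_hom.hom_closed[OF bicommutant_hom])

lemma bicommutant_commutes:
  "F \<in> carrier K \<Longrightarrow> G \<in> commutant N A \<Longrightarrow> x \<in> carrier N \<Longrightarrow> F (G x) = G (F x)"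
  using commutant_commutes[of F "commutant N A" G x] by (simp add: bicommutant_simps)

lemma endos_in_commutant: "A \<subseteq> commutant N A"
  using endos_hom endos_commute by (auto intro: commutantI)

lemma endo_in_bicommutant: "F \<in> A \<Longrightarrow> restrict F (carrier N) \<in> carrier K"
  by (rule bicommutant_memI) (simp_all add: endos_hom commutant_commutes[symmetric])

text \<open>A lies in its own commutant, so the bicommutant lies in the commutant of A.\<close>
lemma bicommutant_commute:
  assumes "F \<in> carrier K" "G \<in> carrier K" "x \<in> carrier N"
  shows "F (G x) = G (F x)"
proof (rule bicommutant_commutes[OF assms(1) _ assms(3)])
  show "G \<in> commutant N A"
  proof (rule commutantI)
    show "abelian_group_hom N N G" using assms(2) by (rule bicommutant_hom)
    fix H y assume "H \<in> A" "y \<in> carrier N"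
    then show "G (H y) = H (G y)"
      using bicommutant_commutes[OF assms(2)] endos_in_commutant by blast
  qed
qed

lemma bicommutant_extensional: "F \<in> carrier K \<Longrightarrow> F \<in> extensional (carrier N)"
  by (simp add: bicommutant_simps)

lemma bicommutant_add_closed:
  assumes "F \<in> carrier K" "G \<in> carrier K"
  shows "F \<oplus>\<^bsub>K\<^esub> G \<in> carrier K"
  unfolding bicommutant_simps(5)
proof (rule bicommutant_memI)
  interpret F: abelian_group_hom N N F using assms(1) by (rule bicommutant_hom)
  interpret G: abelian_group_hom N N G using assms(2) by (rule bicommutant_hom)
  show "abelian_group_hom N N (\<lambda>x. F x \<oplus> G x)"
    by (intro abelian_group_hom_additiveI is_abelian_group) (auto simp: a_ac)
  fix H x assume H: "H \<in> commutant N A" and x: "x \<in> carrier N"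
  interpret H: abelian_group_hom N N H using H by (rule commutant_hom)
  show "F (H x) \<oplus> G (H x) = H (F x \<oplus> G x)"
    using bicommutant_commutes[OF assms(1) H x] bicommutant_commutes[OF assms(2) H x] x by simp
qed

lemma bicommutant_zero_closed: "\<zero>\<^bsub>K\<^esub> \<in> carrier K"
  unfolding bicommutant_simps(4)
proof (rule bicommutant_memI)
  show "abelian_group_hom N N (\<lambda>x. \<zero>)"
    by (intro abelian_group_hom_additiveI is_abelian_group) auto
  fix H x assume "H \<in> commutant N A"
  then interpret H: abelian_group_hom N N H by (rule commutant_hom)
  show "\<zero> = H \<zero>" by simp
qed

lemma bicommutant_neg_closed:
  assumes "F \<in> carrier K"
  shows "(\<lambda>x \<in> carrier N. \<ominus> F x) \<in> carrier K"
proof (rule bicommutant_memI)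
  interpret F: abelian_group_hom N N F using assms by (rule bicommutant_hom)
  show "abelian_group_hom N N (\<lambda>x. \<ominus> F x)"
    by (intro abelian_group_hom_additiveI is_abelian_group) (auto simp: minus_add)
  fix H x assume H: "H \<in> commutant N A" and x: "x \<in> carrier N"
  interpret H: abelian_group_hom N N H using H by (rule commutant_hom)
  show "\<ominus> F (H x) = H (\<ominus> F x)"
    using bicommutant_commutes[OF assms H x] x by simp
qed

lemma bicommutant_mult_closed:
  assumes "F \<in> carrier K" "G \<in> carrier K"
  shows "F \<otimes>\<^bsub>K\<^esub> G \<in> carrier K"
  unfolding bicommutant_simps(2) compose_def
proof (rule bicommutant_memI)
  show "abelian_group_hom N N (\<lambda>x. F (G x))"
    using assms by (intro abelian_group_hom_comp[OF bicommutant_hom bicommutant_hom])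
  fix H x assume H: "H \<in> commutant N A" and x: "x \<in> carrier N"
  show "F (G (H x)) = H (F (G x))"
    using bicommutant_commutes[OF assms(2) H x] bicommutant_commutes[OF assms(1) H]
      bicommutant_closed[OF assms(2) x] by simp
qed

lemma bicommutant_one_closed: "\<one>\<^bsub>K\<^esub> \<in> carrier K"
  unfolding bicommutant_simps(3)
proof (rule bicommutant_memI)
  show "abelian_group_hom N N (\<lambda>x. x)"
    by (intro abelian_group_hom_additiveI is_abelian_group) auto
qed simp

theorem cring_bicommutant: "cring K"
proof (rule cringI)
  show "abelian_group K"
  proof (rule abelian_groupI)
    fix F G H assume F: "F \<in> carrier K" and G: "G \<in> carrier K" and H: "H \<in> carrier K"
    note simps = bicommutant_simps(2-5) bicommutant_closed[OF F] bicommutant_closed[OF G]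
      bicommutant_closed[OF H] bicommutant_extensional[OF F]
    show "F \<oplus>\<^bsub>K\<^esub> G \<in> carrier K" using F G by (rule bicommutant_add_closed)
    show "F \<oplus>\<^bsub>K\<^esub> G \<oplus>\<^bsub>K\<^esub> H = F \<oplus>\<^bsub>K\<^esub> (G \<oplus>\<^bsub>K\<^esub> H)"
      by (rule extensionalityI[where A = "carrier N"]) (simp_all add: simps a_assoc)
    show "F \<oplus>\<^bsub>K\<^esub> G = G \<oplus>\<^bsub>K\<^esub> F"
      by (rule extensionalityI[where A = "carrier N"]) (simp_all add: simps a_comm)
    show "\<zero>\<^bsub>K\<^esub> \<oplus>\<^bsub>K\<^esub> F = F"
      by (rule extensionalityI[where A = "carrier N"]) (simp_all add: simps)
    have "(\<lambda>x \<in> carrier N. \<ominus> F x) \<oplus>\<^bsub>K\<^esub> F = \<zero>\<^bsub>K\<^esub>"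
      by (rule extensionalityI[where A = "carrier N"]) (simp_all add: simps l_neg)
    then show "\<exists>G \<in> carrier K. G \<oplus>\<^bsub>K\<^esub> F = \<zero>\<^bsub>K\<^esub>"
      using bicommutant_neg_closed[OF F] by blast
  qed (rule bicommutant_zero_closed)
next
  show "comm_monoid K"
  proof (rule comm_monoidI)
    fix F G H assume F: "F \<in> carrier K" and G: "G \<in> carrier K" and H: "H \<in> carrier K"
    note simps = bicommutant_simps(2-5) compose_def bicommutant_closed[OF H]
      bicommutant_closed[OF F] bicommutant_extensional[OF F]
    show "F \<otimes>\<^bsub>K\<^esub> G \<in> carrier K" using F G by (rule bicommutant_mult_closed)
    show "F \<otimes>\<^bsub>K\<^esub> G \<otimes>\<^bsub>K\<^esub> H = F \<otimes>\<^bsub>K\<^esub> (G \<otimes>\<^bsub>K\<^esub> H)"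
      by (rule extensionalityI[where A = "carrier N"]) (simp_all add: simps)
    show "\<one>\<^bsub>K\<^esub> \<otimes>\<^bsub>K\<^esub> F = F"
      by (rule extensionalityI[where A = "carrier N"]) (simp_all add: simps)
    show "F \<otimes>\<^bsub>K\<^esub> G = G \<otimes>\<^bsub>K\<^esub> F"
      by (rule extensionalityI[where A = "carrier N"]) (simp_all add: simps bicommutant_commute F G)
  qed (rule bicommutant_one_closed)
next
  fix F G H assume "H \<in> carrier K"
  then show "(F \<oplus>\<^bsub>K\<^esub> G) \<otimes>\<^bsub>K\<^esub> H = F \<otimes>\<^bsub>K\<^esub> H \<oplus>\<^bsub>K\<^esub> G \<otimes>\<^bsub>K\<^esub> H"
    by (intro extensionalityI[where A = "carrier N"])
      (simp_all add: bicommutant_simps(2-5) compose_def bicommutant_closed)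
qed

end

theorem module_bicommutant:
  fixes N :: "('r, 'c) module"
  assumes "commuting_endos N A"
  shows "module (bicommutant N A) (with_smult N (\<lambda>F x. F x))"
proof -
  interpret commuting_endos N A by fact
  show ?thesis
    by (rule moduleI[OF cring_bicommutant abelian_group_with_smult[OF is_abelian_group]])
      (simp_all add: bicommutant_simps(2-5) bicommutant_closed compose_def
        abelian_group_hom.hom_add[OF bicommutant_hom])
qed

section \<open>The base change as a quotient of a free abelian group\<close>

locale base_change_data = E: module R E + T: cring T
  for R :: "'r ring" and E :: "('r, 'e) module" and T :: "'t ring" +
  fixes f :: "'r \<Rightarrow> 't"
  assumes f_hom: "f \<in> ring_hom R T"
begin

abbreviation "free \<equiv> tensor_free E T"
abbreviation "rel \<equiv> tensor_rel R E T f"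
abbreviation "cls \<equiv> tensor_cls R E T f"
abbreviation "M \<equiv> base_change R E T f"
abbreviation "pure p \<equiv> cls (delta p)"

lemma free_iff: "g \<in> free \<longleftrightarrow> finite (supp g) \<and> supp g \<subseteq> carrier E \<times> carrier T"
  by (simp add: tensor_free_def supp_def)

lemma free_zero: "(\<lambda>_. 0) \<in> free"
  by (simp add: free_iff supp_def)

lemma free_delta: "p \<in> carrier E \<times> carrier T \<Longrightarrow> delta p \<in> free"
  by (simp add: free_iff)

lemma free_neg: "g \<in> free \<Longrightarrow> (\<lambda>q. - g q) \<in> free"
  by (simp add: free_iff)

lemma free_add: "g \<in> free \<Longrightarrow> h \<in> free \<Longrightarrow> (\<lambda>q. g q + h q) \<in> free"
  using supp_add[of g h] unfolding free_iff
  by (meson finite_Un finite_subset le_sup_iff subset_trans)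

lemma free_diff: "g \<in> free \<Longrightarrow> h \<in> free \<Longrightarrow> (\<lambda>q. g q - h q) \<in> free"
  using supp_diff[of g h] unfolding free_iff
  by (meson finite_Un finite_subset le_sup_iff subset_trans)

lemma free_push:
  assumes "g \<in> free" "\<phi> \<in> carrier E \<times> carrier T \<rightarrow> carrier E \<times> carrier T"
  shows "push \<phi> g \<in> free"
proof -
  have "\<phi> ` supp g \<subseteq> carrier E \<times> carrier T" and "finite (\<phi> ` supp g)"
    using assms unfolding free_iff by (auto intro!: funcset_image)
  then show ?thesis
    using supp_push[of \<phi> g] unfolding free_iff by (meson finite_subset subset_trans)
qed

lemma rel_free: "g \<in> rel \<Longrightarrow> g \<in> free"
proof (induction rule: tensor_rel.induct)
  case (rel_bal r e t)
  then show ?case by (intro free_diff free_delta) (auto simp: ring_hom_closed[OF f_hom])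
qed (auto intro!: free_zero free_add free_neg free_diff free_delta)

lemma rel_diff: "g \<in> rel \<Longrightarrow> h \<in> rel \<Longrightarrow> (\<lambda>q. g q - h q) \<in> rel"
  using tensor_rel.rel_add[OF _ tensor_rel.rel_neg, of g R E T f h] by simp

lemma rel_refl: "(\<lambda>q. g q - g q) \<in> rel"
  using tensor_rel.rel_zero by simp

lemma cls_eq_iff:
  assumes "g \<in> free" "h \<in> free"
  shows "cls g = cls h \<longleftrightarrow> (\<lambda>q. g q - h q) \<in> rel"
proof
  assume "cls g = cls h"
  moreover have "g \<in> cls g" using assms rel_refl by (simp add: tensor_cls_def)
  ultimately have "(\<lambda>q. h q - g q) \<in> rel" by (simp add: tensor_cls_def)
  from tensor_rel.rel_neg[OF this] show "(\<lambda>q. g q - h q) \<in> rel" by simp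
next
  assume gh: "(\<lambda>q. g q - h q) \<in> rel"
  show "cls g = cls h"
    unfolding tensor_cls_def
  proof (intro Collect_cong conj_cong refl iffI)
    fix k assume "(\<lambda>q. g q - k q) \<in> rel"
    from rel_diff[OF this gh] show "(\<lambda>q. h q - k q) \<in> rel" by simp
  next
    fix k assume "(\<lambda>q. h q - k q) \<in> rel"
    from tensor_rel.rel_add[OF gh this] show "(\<lambda>q. g q - k q) \<in> rel" by simp
  qed
qed

lemma carrier_base_change: "carrier M = cls ` free"
  by (simp add: base_change_def)

lemma cls_closed: "g \<in> free \<Longrightarrow> cls g \<in> carrier M"
  by (simp add: carrier_base_change)

lemma tensor_rep:
  assumes "X \<in> carrier M"
  shows "tensor_rep X \<in> free" "cls (tensor_rep X) = X"
proof -
  obtain g where g: "g \<in> free" "X = cls g"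
    using assms by (auto simp: carrier_base_change)
  have "g \<in> X"
    unfolding g(2) tensor_cls_def using g(1) rel_refl[of g] by simp
  then have "tensor_rep X \<in> X"
    unfolding tensor_rep_def by (rule someI[where P = "\<lambda>h. h \<in> X"])
  then have rep: "tensor_rep X \<in> free" "(\<lambda>q. g q - tensor_rep X q) \<in> rel"
    unfolding g(2) tensor_cls_def by simp_all
  show "tensor_rep X \<in> free" by (fact rep(1))
  have "cls g = cls (tensor_rep X)"
    using cls_eq_iff[OF g(1) rep(1)] rep(2) by simp
  with g(2) show "cls (tensor_rep X) = X" by metis
qed

lemma add_cls:
  assumes "g \<in> free" "h \<in> free"
  shows "cls g \<oplus>\<^bsub>M\<^esub> cls h = cls (\<lambda>q. g q + h q)"
proof -
  let ?g = "tensor_rep (cls g)" and ?h = "tensor_rep (cls h)"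
  have reps: "?g \<in> free" "?h \<in> free" "cls ?g = cls g" "cls ?h = cls h"
    using tensor_rep cls_closed assms by auto
  then have "(\<lambda>q. ?g q - g q) \<in> rel" "(\<lambda>q. ?h q - h q) \<in> rel"
    using cls_eq_iff assms by auto
  then have "(\<lambda>q. (?g q + ?h q) - (g q + h q)) \<in> rel"
    using tensor_rel.rel_add by (fastforce simp: algebra_simps)
  then have "cls (\<lambda>q. ?g q + ?h q) = cls (\<lambda>q. g q + h q)"
    using cls_eq_iff free_add reps assms by simp
  then show ?thesis by (simp add: base_change_def)
qed

lemma zero_base_change: "\<zero>\<^bsub>M\<^esub> = cls (\<lambda>_. 0)"
  by (simp add: base_change_def)

theorem abelian_group_base_change: "abelian_group M"
proof (rule abelian_groupI, unfold carrier_base_change)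
  fix X Y Z assume "X \<in> cls ` free" "Y \<in> cls ` free" "Z \<in> cls ` free"
  then obtain g h k where free: "g \<in> free" "h \<in> free" "k \<in> free"
    and cls: "X = cls g" "Y = cls h" "Z = cls k"
    by auto
  show "X \<oplus>\<^bsub>M\<^esub> Y \<in> cls ` free"
    using free cls by (simp add: add_cls free_add)
  show "X \<oplus>\<^bsub>M\<^esub> Y \<oplus>\<^bsub>M\<^esub> Z = X \<oplus>\<^bsub>M\<^esub> (Y \<oplus>\<^bsub>M\<^esub> Z)"
    using free cls by (simp add: add_cls free_add add.assoc)
  show "X \<oplus>\<^bsub>M\<^esub> Y = Y \<oplus>\<^bsub>M\<^esub> X"
    using free cls by (simp add: add_cls add.commute)
  show "\<zero>\<^bsub>M\<^esub> \<oplus>\<^bsub>M\<^esub> X = X"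
    using free cls by (simp add: add_cls free_zero zero_base_change)
  have "cls (\<lambda>q. - g q) \<oplus>\<^bsub>M\<^esub> X = \<zero>\<^bsub>M\<^esub>"
    using free cls by (simp add: add_cls free_neg zero_base_change)
  then show "\<exists>W \<in> cls ` free. W \<oplus>\<^bsub>M\<^esub> X = \<zero>\<^bsub>M\<^esub>"
    using free_neg[OF free(1)] by (intro bexI[of _ "cls (\<lambda>q. - g q)"]) simp_all
qed (simp add: zero_base_change free_zero)

lemma pure_closed: "e \<in> carrier E \<Longrightarrow> t \<in> carrier T \<Longrightarrow> pure (e, t) \<in> carrier M"
  by (simp add: cls_closed free_delta)

lemma neg_cls: "g \<in> free \<Longrightarrow> \<ominus>\<^bsub>M\<^esub> cls g = cls (\<lambda>q. - g q)"
  by (rule abelian_group.minus_equality[OF abelian_group_base_change])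
    (simp_all add: add_cls free_neg cls_closed zero_base_change)

lemma pure_add_left:
  assumes "e \<in> carrier E" "e' \<in> carrier E" "t \<in> carrier T"
  shows "pure (e \<oplus>\<^bsub>E\<^esub> e', t) = pure (e, t) \<oplus>\<^bsub>M\<^esub> pure (e', t)"
proof -
  have "pure (e \<oplus>\<^bsub>E\<^esub> e', t) = cls (\<lambda>q. delta (e, t) q + delta (e', t) q)"
    using assms tensor_rel.rel_addl[OF assms]
    by (subst cls_eq_iff) (auto intro!: free_delta free_add simp: algebra_simps)
  then show ?thesis using assms by (simp add: add_cls free_delta)
qed

lemma pure_add_right:
  assumes "e \<in> carrier E" "t \<in> carrier T" "t' \<in> carrier T"
  shows "pure (e, t \<oplus>\<^bsub>T\<^esub> t') = pure (e, t) \<oplus>\<^bsub>M\<^esub> pure (e, t')"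
proof -
  have "pure (e, t \<oplus>\<^bsub>T\<^esub> t') = cls (\<lambda>q. delta (e, t) q + delta (e, t') q)"
    using assms tensor_rel.rel_addr[OF assms]
    by (subst cls_eq_iff) (auto intro!: free_delta free_add simp: algebra_simps)
  then show ?thesis using assms by (simp add: add_cls free_delta)
qed

lemma pure_left_hom: "t \<in> carrier T \<Longrightarrow> abelian_group_hom E M (\<lambda>e. pure (e, t))"
proof (rule abelian_group_hom_additiveI[OF _ abelian_group_base_change])
  show "abelian_group E" ..
qed (simp_all add: Pi_iff pure_closed pure_add_left)

lemma base_change_induct [consumes 1, case_names zero add neg pure]:
  assumes "X \<in> carrier M"
    and zero: "P \<zero>\<^bsub>M\<^esub>"
    and add: "\<And>X Y. X \<in> carrier M \<Longrightarrow> Y \<in> carrier M \<Longrightarrow> P X \<Longrightarrow> P Y \<Longrightarrow> P (X \<oplus>\<^bsub>M\<^esub> Y)"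
    and neg: "\<And>X. X \<in> carrier M \<Longrightarrow> P X \<Longrightarrow> P (\<ominus>\<^bsub>M\<^esub> X)"
    and pure: "\<And>e t. e \<in> carrier E \<Longrightarrow> t \<in> carrier T \<Longrightarrow> P (pure (e, t))"
  shows "P X"
proof -
  obtain g where g: "g \<in> free" "cls g = X"
    using assms(1) by (auto simp: carrier_base_change)
  from g(1) have "finite (supp g)" by (simp add: free_iff)
  then have "g \<in> free \<and> P (cls g)"
  proof (induction rule: finite_support_induct)
    case zero
    then show ?case using assms(2) by (simp add: free_zero zero_base_change)
  next
    case (plus h p)
    then have p: "p \<in> carrier E \<times> carrier T" using g(1) by (auto simp: free_iff)
    then show ?case
      using plus add[of "cls h" "pure p"] pure
      by (auto simp: add_cls free_add free_delta cls_closed)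
  next
    case (minus h p)
    then have p: "p \<in> carrier E \<times> carrier T" using g(1) by (auto simp: free_iff)
    then show ?case
      using minus add[of "cls h" "\<ominus>\<^bsub>M\<^esub> pure p"] neg[of "pure p"] pure
      by (auto simp: add_cls neg_cls free_diff free_neg free_delta cls_closed)
  qed
  then show ?thesis using g(2) by simp
qed

lemma base_change_hom_eqI:
  assumes "abelian_group_hom M M F" "abelian_group_hom M M G"
    and "\<And>e t. e \<in> carrier E \<Longrightarrow> t \<in> carrier T \<Longrightarrow> F (pure (e, t)) = G (pure (e, t))"
    and "X \<in> carrier M"
  shows "F X = G X"
proof -
  interpret F: abelian_group_hom M M F by fact
  interpret G: abelian_group_hom M M G by fact
  show ?thesis
    using assms(4) by (induction rule: base_change_induct) (simp_all add: assms(3))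
qed

definition descends :: "('e \<times> 't \<Rightarrow> 'e \<times> 't) \<Rightarrow> bool" where
  "descends \<phi> \<longleftrightarrow> \<phi> \<in> carrier E \<times> carrier T \<rightarrow> carrier E \<times> carrier T \<and> (\<forall>g \<in> rel. push \<phi> g \<in> rel)"

definition induced :: "('e \<times> 't \<Rightarrow> 'e \<times> 't) \<Rightarrow> ('e \<times> 't \<Rightarrow> int) set \<Rightarrow> ('e \<times> 't \<Rightarrow> int) set" where
  "induced \<phi> = (\<lambda>X \<in> carrier M. cls (push \<phi> (tensor_rep X)))"

lemma descendsI:
  assumes maps: "\<phi> \<in> carrier E \<times> carrier T \<rightarrow> carrier E \<times> carrier T"
    and addl: "\<And>e e' t. e \<in> carrier E \<Longrightarrow> e' \<in> carrier E \<Longrightarrow> t \<in> carrier T \<Longrightarrow>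
      (\<lambda>q. delta (\<phi> (e \<oplus>\<^bsub>E\<^esub> e', t)) q - delta (\<phi> (e, t)) q - delta (\<phi> (e', t)) q) \<in> rel"
    and addr: "\<And>e t t'. e \<in> carrier E \<Longrightarrow> t \<in> carrier T \<Longrightarrow> t' \<in> carrier T \<Longrightarrow>
      (\<lambda>q. delta (\<phi> (e, t \<oplus>\<^bsub>T\<^esub> t')) q - delta (\<phi> (e, t)) q - delta (\<phi> (e, t')) q) \<in> rel"
    and bal: "\<And>r e t. r \<in> carrier R \<Longrightarrow> e \<in> carrier E \<Longrightarrow> t \<in> carrier T \<Longrightarrow>
      (\<lambda>q. delta (\<phi> (r \<odot>\<^bsub>E\<^esub> e, t)) q - delta (\<phi> (e, f r \<otimes>\<^bsub>T\<^esub> t)) q) \<in> rel"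
  shows "descends \<phi>"
proof -
  have "push \<phi> g \<in> rel" if "g \<in> rel" for g
    using that
  proof (induction rule: tensor_rel.induct)
    case (rel_add g h)
    then show ?case
      using tensor_rel.rel_add[OF rel_add.IH] rel_free by (simp add: push_add free_iff)
  next
    case (rel_neg g)
    then show ?case using tensor_rel.rel_neg by (simp add: push_neg)
  qed (simp_all add: push_diff addl addr bal tensor_rel.rel_zero)
  with maps show ?thesis by (simp add: descends_def)
qed

lemma descends_free: "descends \<phi> \<Longrightarrow> g \<in> free \<Longrightarrow> push \<phi> g \<in> free"
  by (simp add: descends_def free_push)

lemma induced_cls:
  assumes "descends \<phi>" "g \<in> free"
  shows "induced \<phi> (cls g) = cls (push \<phi> g)"
proof -
  let ?r = "tensor_rep (cls g)"
  have r: "?r \<in> free" "cls ?r = cls g" using tensor_rep cls_closed assms(2) by auto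
  then have "(\<lambda>q. ?r q - g q) \<in> rel" using cls_eq_iff assms(2) by auto
  then have "push \<phi> (\<lambda>q. ?r q - g q) \<in> rel" using assms(1) by (simp add: descends_def)
  then have "(\<lambda>q. push \<phi> ?r q - push \<phi> g q) \<in> rel"
    using r(1) assms(2) by (simp add: push_diff free_iff)
  then have "cls (push \<phi> ?r) = cls (push \<phi> g)"
    using cls_eq_iff descends_free assms r(1) by simp
  then show ?thesis using cls_closed[OF assms(2)] by (simp add: induced_def)
qed

lemma induced_pure:
  "descends \<phi> \<Longrightarrow> p \<in> carrier E \<times> carrier T \<Longrightarrow> induced \<phi> (pure p) = pure (\<phi> p)"
  by (simp add: induced_cls free_delta)

lemma induced_hom:
  assumes "descends \<phi>"
  shows "abelian_group_hom M M (induced \<phi>)"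
proof (rule abelian_group_hom_additiveI[OF abelian_group_base_change abelian_group_base_change])
  show "induced \<phi> \<in> carrier M \<rightarrow> carrier M"
    using assms by (auto simp: carrier_base_change induced_cls descends_free)
  fix X Y assume "X \<in> carrier M" "Y \<in> carrier M"
  then obtain g h where gh: "g \<in> free" "h \<in> free" "X = cls g" "Y = cls h"
    by (auto simp: carrier_base_change)
  moreover have "finite (supp g)" "finite (supp h)"
    using gh by (simp_all add: free_iff)
  ultimately show "induced \<phi> (X \<oplus>\<^bsub>M\<^esub> Y) = induced \<phi> X \<oplus>\<^bsub>M\<^esub> induced \<phi> Y"
    using assms by (simp add: add_cls induced_cls free_add descends_free push_add)
qed

lemma induced_commute:
  assumes "descends \<phi>" "descends \<psi>"
    and "\<And>p. p \<in> carrier E \<times> carrier T \<Longrightarrow> \<phi> (\<psi> p) = \<psi> (\<phi> p)"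
    and "X \<in> carrier M"
  shows "induced \<phi> (induced \<psi> X) = induced \<psi> (induced \<phi> X)"
proof (rule base_change_hom_eqI[OF _ _ _ assms(4)])
  show "abelian_group_hom M M (\<lambda>X. induced \<phi> (induced \<psi> X))"
    and "abelian_group_hom M M (\<lambda>X. induced \<psi> (induced \<phi> X))"
    using assms(1,2) by (auto intro!: abelian_group_hom_comp[OF induced_hom induced_hom])
  fix e t assume "e \<in> carrier E" "t \<in> carrier T"
  then show "induced \<phi> (induced \<psi> (pure (e, t))) = induced \<psi> (induced \<phi> (pure (e, t)))"
    using assms(1,2,3) by (simp add: induced_pure descends_def Pi_iff)
qed

lemma tensor_act_eq_push:
  assumes "g \<in> free"
  shows "tensor_act T t g = push (\<lambda>(e, u). (e, t \<otimes>\<^bsub>T\<^esub> u)) g"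
proof (rule ext, clarify)
  fix e s
  let ?U = "{u \<in> carrier T. t \<otimes>\<^bsub>T\<^esub> u = s \<and> g (e, u) \<noteq> 0}"
  have "{p. p \<in> supp g \<and> (case p of (e, u) \<Rightarrow> (e, t \<otimes>\<^bsub>T\<^esub> u)) = (e, s)} = (\<lambda>u. (e, u)) ` ?U"
    using assms by (auto simp: free_iff supp_def)
  then have "push (\<lambda>(e, u). (e, t \<otimes>\<^bsub>T\<^esub> u)) g (e, s) = (\<Sum>p \<in> (\<lambda>u. (e, u)) ` ?U. g p)"
    by (simp add: push_def)
  also have "\<dots> = (\<Sum>u \<in> ?U. g (e, u))"
    by (rule sum.reindex_cong[of "\<lambda>u. (e, u)"]) (auto simp: inj_on_def)
  finally show "tensor_act T t g (e, s) = push (\<lambda>(e, u). (e, t \<otimes>\<^bsub>T\<^esub> u)) g (e, s)"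
    by (simp add: tensor_act_def)
qed

end

section \<open>Base change of an almost finitely generated module\<close>

locale base_change_of_afg = base_change_data R E T f + S: cring S
  for R :: "'r ring" and E :: "('r, 'e) module" and T :: "'t ring" and f and S :: "'s ring" +
  fixes \<rho> :: "'r \<Rightarrow> 's" and act :: "'s \<Rightarrow> 'e \<Rightarrow> 'e"
  assumes \<rho>_hom: "\<rho> \<in> ring_hom R S"
    and module_act: "module S (with_smult E act)"
    and act_\<rho>: "\<And>a x. a \<in> carrier R \<Longrightarrow> x \<in> carrier E \<Longrightarrow> act (\<rho> a) x = a \<odot>\<^bsub>E\<^esub> x"
begin

lemma act_closed: "s \<in> carrier S \<Longrightarrow> e \<in> carrier E \<Longrightarrow> act s e \<in> carrier E"
  using module.smult_closed[OF module_act] by simp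

lemma act_add:
  "s \<in> carrier S \<Longrightarrow> e \<in> carrier E \<Longrightarrow> e' \<in> carrier E \<Longrightarrow> act s (e \<oplus>\<^bsub>E\<^esub> e') = act s e \<oplus>\<^bsub>E\<^esub> act s e'"
  using module.smult_r_distr[OF module_act] by simp

lemma act_commute:
  assumes "s \<in> carrier S" "s' \<in> carrier S" "e \<in> carrier E"
  shows "act s (act s' e) = act s' (act s e)"
proof -
  have "act s (act s' e) = act (s \<otimes>\<^bsub>S\<^esub> s') e"
    using module.smult_assoc1[OF module_act] assms by simp
  also have "\<dots> = act (s' \<otimes>\<^bsub>S\<^esub> s) e"
    using assms by (simp add: S.m_comm)
  also have "\<dots> = act s' (act s e)"
    using module.smult_assoc1[OF module_act] assms by simp
  finally show ?thesis .
qed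

lemma act_balanced:
  assumes "s \<in> carrier S" "r \<in> carrier R" "e \<in> carrier E"
  shows "act s (r \<odot>\<^bsub>E\<^esub> e) = r \<odot>\<^bsub>E\<^esub> act s e"
  using act_commute[OF assms(1) ring_hom_closed[OF \<rho>_hom assms(2)] assms(3)] assms
  by (simp add: act_\<rho> act_closed)

definition act_S :: "'s \<Rightarrow> 'e \<times> 't \<Rightarrow> 'e \<times> 't" where
  "act_S s = (\<lambda>(e, u). (act s e, u))"

definition act_T :: "'t \<Rightarrow> 'e \<times> 't \<Rightarrow> 'e \<times> 't" where
  "act_T t = (\<lambda>(e, u). (e, t \<otimes>\<^bsub>T\<^esub> u))"

lemma descends_act_S: "s \<in> carrier S \<Longrightarrow> descends (act_S s)"
  by (rule descendsI)
    (auto simp: act_S_def act_closed act_add act_balanced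
      intro!: tensor_rel.rel_addl tensor_rel.rel_addr tensor_rel.rel_bal)

lemma descends_act_T: "t \<in> carrier T \<Longrightarrow> descends (act_T t)"
proof (rule descendsI)
  fix r e u assume t: "t \<in> carrier T" and reu: "r \<in> carrier R" "e \<in> carrier E" "u \<in> carrier T"
  have "t \<otimes>\<^bsub>T\<^esub> (f r \<otimes>\<^bsub>T\<^esub> u) = f r \<otimes>\<^bsub>T\<^esub> (t \<otimes>\<^bsub>T\<^esub> u)"
    using t reu ring_hom_closed[OF f_hom] by (simp add: T.m_lcomm)
  then show "(\<lambda>q. delta (act_T t (r \<odot>\<^bsub>E\<^esub> e, u)) q - delta (act_T t (e, f r \<otimes>\<^bsub>T\<^esub> u)) q) \<in> rel"
    using tensor_rel.rel_bal[of r R e E "t \<otimes>\<^bsub>T\<^esub> u" T f] t reu by (simp add: act_T_def)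
qed (auto simp: act_T_def T.r_distr intro!: tensor_rel.rel_addl tensor_rel.rel_addr)

definition generators :: "('e \<times> 't \<Rightarrow> 'e \<times> 't) set" where
  "generators = act_S ` carrier S \<union> act_T ` carrier T"

lemma generators_commute:
  assumes "\<phi> \<in> generators" "\<psi> \<in> generators" "p \<in> carrier E \<times> carrier T"
  shows "\<phi> (\<psi> p) = \<psi> (\<phi> p)"
  using assms by (auto simp: generators_def act_S_def act_T_def act_commute T.m_lcomm)

lemma descends_generators: "\<phi> \<in> generators \<Longrightarrow> descends \<phi>"
  by (auto simp: generators_def descends_act_S descends_act_T)

lemma commuting_endos_induced: "commuting_endos M (induced ` generators)"
proof (rule commuting_endos.intro[OF abelian_group_base_change commuting_endos_axioms.intro])
  fix F G X assume "F \<in> induced ` generators" "G \<in> induced ` generators" and X: "X \<in> carrier M"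
  then obtain \<phi> \<psi> where gen: "\<phi> \<in> generators" "\<psi> \<in> generators"
    and FG: "F = induced \<phi>" "G = induced \<psi>"
    by blast
  show "F (G X) = G (F X)"
    unfolding FG using gen
    by (intro induced_commute[OF descends_generators descends_generators generators_commute X])
qed (auto intro!: induced_hom descends_generators)

sublocale K: commuting_endos M "induced ` generators"
  by (rule commuting_endos_induced)

abbreviation "K \<equiv> bicommutant M (induced ` generators)"

abbreviation "MK \<equiv> with_smult M (\<lambda>F X. F X)"

sublocale MK: module K MK
  by (rule module_bicommutant[OF commuting_endos_induced])

lemma induced_in_bicommutant: "\<phi> \<in> generators \<Longrightarrow> induced \<phi> \<in> carrier K"
  using K.endo_in_bicommutant[of "induced \<phi>"] by (simp add: induced_def)

lemma bicommutant_eq_on_pure: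
  assumes "F \<in> carrier K" "G \<in> carrier K"
    and "\<And>e t. e \<in> carrier E \<Longrightarrow> t \<in> carrier T \<Longrightarrow> F (pure (e, t)) = G (pure (e, t))"
  shows "F = G"
proof (rule extensionalityI[OF K.bicommutant_extensional[OF assms(1)]
      K.bicommutant_extensional[OF assms(2)]])
  show "F X = G X" if "X \<in> carrier M" for X
    using K.bicommutant_hom[OF assms(1)] K.bicommutant_hom[OF assms(2)] assms(3) that
    by (rule base_change_hom_eqI)
qed

lemma induced_act_T_in_bicommutant: "t \<in> carrier T \<Longrightarrow> induced (act_T t) \<in> carrier K"
  by (rule induced_in_bicommutant) (simp add: generators_def)

lemma induced_act_S_in_bicommutant: "s \<in> carrier S \<Longrightarrow> induced (act_S s) \<in> carrier K"
  by (rule induced_in_bicommutant) (simp add: generators_def)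

lemma induced_act_T_pure:
  "t \<in> carrier T \<Longrightarrow> e \<in> carrier E \<Longrightarrow> u \<in> carrier T \<Longrightarrow>
    induced (act_T t) (pure (e, u)) = pure (e, t \<otimes>\<^bsub>T\<^esub> u)"
  by (simp add: induced_pure[OF descends_act_T]) (simp add: act_T_def)

lemma induced_act_S_pure:
  "s \<in> carrier S \<Longrightarrow> e \<in> carrier E \<Longrightarrow> u \<in> carrier T \<Longrightarrow>
    induced (act_S s) (pure (e, u)) = pure (act s e, u)"
  by (simp add: induced_pure[OF descends_act_S]) (simp add: act_S_def)

lemma act_T_ring_hom: "(\<lambda>t. induced (act_T t)) \<in> ring_hom T K"
proof (rule ring_hom_memI)
  fix t t' assume t: "t \<in> carrier T" and t': "t' \<in> carrier T"
  note in_K = induced_act_T_in_bicommutant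
  show "induced (act_T t) \<in> carrier K" using t by (rule in_K)
  show "induced (act_T (t \<otimes>\<^bsub>T\<^esub> t')) = induced (act_T t) \<otimes>\<^bsub>K\<^esub> induced (act_T t')"
    by (rule bicommutant_eq_on_pure[OF in_K K.bicommutant_mult_closed[OF in_K in_K]])
      (use t t' in \<open>simp_all add: K.bicommutant_simps(2) compose_def induced_act_T_pure pure_closed
        T.m_assoc\<close>)
  show "induced (act_T (t \<oplus>\<^bsub>T\<^esub> t')) = induced (act_T t) \<oplus>\<^bsub>K\<^esub> induced (act_T t')"
    by (rule bicommutant_eq_on_pure[OF in_K K.bicommutant_add_closed[OF in_K in_K]])
      (use t t' in \<open>simp_all add: K.bicommutant_simps(5) induced_act_T_pure pure_closed
        pure_add_right T.l_distr\<close>)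
next
  show "induced (act_T \<one>\<^bsub>T\<^esub>) = \<one>\<^bsub>K\<^esub>"
    by (rule bicommutant_eq_on_pure[OF induced_act_T_in_bicommutant K.bicommutant_one_closed])
      (simp_all add: K.bicommutant_simps(3) induced_act_T_pure pure_closed)
qed

lemma induced_act_T_smult:
  assumes "t \<in> carrier T" "X \<in> carrier M"
  shows "induced (act_T t) X = t \<odot>\<^bsub>M\<^esub> X"
  using assms tensor_act_eq_push[OF tensor_rep(1)[OF assms(2)], of t]
  by (simp add: induced_def base_change_def act_T_def)

lemma pure_act_eq_smult:
  assumes "s \<in> carrier S" "e \<in> carrier E" "t \<in> carrier T"
  shows "pure (act s e, t) = (induced (act_S s) \<otimes>\<^bsub>K\<^esub> induced (act_T t)) \<odot>\<^bsub>MK\<^esub> pure (e, \<one>\<^bsub>T\<^esub>)"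
  using assms
  by (simp add: K.bicommutant_simps(2) compose_def pure_closed induced_act_T_pure
      induced_act_S_pure)

lemma pure_in_lin_span:
  assumes B: "finite B" "B \<subseteq> carrier E"
    and e: "e \<in> lin_span S (with_smult E act) B" and t: "t \<in> carrier T"
  shows "pure (e, t) \<in> lin_span K MK ((\<lambda>v. pure (v, \<one>\<^bsub>T\<^esub>)) ` B)"
proof -
  let ?A = "(\<lambda>v. pure (v, \<one>\<^bsub>T\<^esub>)) ` B"
  have A: "finite ?A" "?A \<subseteq> carrier MK" using B by (auto simp: pure_closed)
  obtain a where a: "a \<in> B \<rightarrow> carrier S" "e = finsum E (\<lambda>v. act (a v) v) B"
    using e by (auto simp: lin_span_def)
  have "(\<lambda>v. act (a v) v) \<in> B \<rightarrow> carrier E"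
    using a(1) B(2) by (auto intro: act_closed)
  then have "pure (e, t) = finsum M (\<lambda>v. pure (act (a v) v, t)) B"
    unfolding a(2) by (rule abelian_group_hom.hom_finsum[OF pure_left_hom[OF t] B(1)])
  moreover have "pure (act (a v) v, t) \<in> lin_span K MK ?A" if v: "v \<in> B" for v
  proof -
    have av: "a v \<in> carrier S" "v \<in> carrier E" using a(1) B(2) v by auto
    have "pure (v, \<one>\<^bsub>T\<^esub>) \<in> lin_span K MK ?A"
      using v by (intro MK.lin_span_base[OF A]) simp
    then show ?thesis
      unfolding pure_act_eq_smult[OF av t]
      by (intro MK.lin_span_smult[OF A] K.bicommutant_mult_closed
          induced_act_S_in_bicommutant induced_act_T_in_bicommutant av(1) t)
  qed
  ultimately show ?thesis
    using MK.lin_span_finsum[OF A B(1), of "\<lambda>v. pure (act (a v) v, t)"] by auto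
qed

lemma fin_gen_base_change:
  assumes "fin_gen S (with_smult E act)"
  shows "fin_gen K MK"
proof -
  obtain B where B: "finite B" "B \<subseteq> carrier E"
    and span: "carrier E \<subseteq> lin_span S (with_smult E act) B"
    using assms by (auto simp: fin_gen_iff)
  let ?A = "(\<lambda>v. pure (v, \<one>\<^bsub>T\<^esub>)) ` B"
  have A: "finite ?A" "?A \<subseteq> carrier MK" using B by (auto simp: pure_closed)
  have "X \<in> lin_span K MK ?A" if "X \<in> carrier M" for X
    using that
  proof (induction rule: base_change_induct)
    case zero
    then show ?case using MK.lin_span_zero[OF A] by simp
  next
    case (add X Y)
    then show ?case using MK.lin_span_add[OF A] by simp
  next
    case (neg X)
    then show ?case using MK.lin_span_neg[OF A] by simp
  qed (use B span in \<open>auto intro: pure_in_lin_span\<close>)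
  with A show ?thesis by (auto simp: fin_gen_iff)
qed

end

theorem proposition4p3:
  fixes R :: "'r ring" and T :: "'t ring" and E :: "('r, 'e) module"
    and f :: "'r \<Rightarrow> 't"
  assumes "cring R" and "cring T"
    and "module R E"
    and "afg_with TYPE('s) R E"
    and "f \<in> ring_hom R T"
  shows "afg T (base_change R E T f)"
proof -
  obtain S :: "'s ring" and \<rho> act
    where S: "cring S" "\<rho> \<in> ring_hom R S" "module S (with_smult E act)"
      "\<forall>a \<in> carrier R. \<forall>x \<in> carrier E. act (\<rho> a) x = a \<odot>\<^bsub>E\<^esub> x"
      "fin_gen S (with_smult E act)"
    using assms(4) unfolding afg_with_def by blast
  interpret base_change_of_afg R E T f S \<rho> act
    using assms S by (intro base_change_of_afg.intro base_change_data.intro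
        base_change_data_axioms.intro base_change_of_afg_axioms.intro) auto
  show ?thesis
    unfolding afg_def afg_with_def
    by (intro exI[of _ K] exI[of _ "\<lambda>t. induced (act_T t)"] exI[of _ "\<lambda>F X. F X"] conjI ballI)
      (simp_all add: K.cring_bicommutant act_T_ring_hom induced_act_T_smult
        module_bicommutant[OF commuting_endos_induced] fin_gen_base_change[OF S(5)])
qed

end
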